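(* Assume the hypotheses of Corollary 6.10 as recalled in the context (in particular $L_\lambda$ self-adjoint), take $\sigma=0$, and assume $\beta_1(\lambda)=\dots=\beta_m(\lambda)=:\beta_*(\lambda)$ for all $\lambda\in\Lambda_{2k}$. Then for $\lambda$ sufficiently close to $\lambda_c$, $$\widehat h^{\rm app}_\lambda(\xi):=\int_{-\infty}^0 e^{-sL^{\mathfrak s}_\lambda}P_{\mathfrak s}F_k(e^{sL^{\mathfrak c}_\lambda}\xi)\,ds=(-L^{\mathfrak s}_\lambda)^{-1}P_{\mathfrak s}F_k(\xi)+O\big(|\beta_*(\lambda)|\,\|\xi\|_\alpha^k\big),\qquad\xi\in\mathcal H^{\mathfrak c}.$$
   Context: $\mathcal H$ infinite-dimensional separable real Hilbert space with inner product $\langle\cdot,\cdot\rangle$; $A$ sectorial with compact resolvent, $\mathrm{Re}\,\sigma(-A)<0$; $\mathcal H_\gamma=D(A^\gamma)$, $\|u\|_\gamma=\|A^\gamma u\|$; $L_\lambda=-A+B_\lambda$ ($B_\lambda:\mathcal H_{\gamma_0}\to\mathcal H$ bounded, continuous in $\lambda$), here self-adjoint, with real eigenvalues $\beta_1(\lambda)\ge\beta_2(\lambda)\ge\dots$ (with multiplicity) and normalized eigenvectors forming a Hilbert basis; $\alpha\in[0,1)$; $F$ is $C^p$ with $F(u)=F_k(u,\dots,u)+O(\|u\|_\alpha^{k+1})$, $p>k\ge2$, $F_k$ continuous $k$-linear, $F_k(u)=F_k(u,\dots,u)$. Principle of exchange of stabilities at $\lambda_c$ with $m$ critical eigenvalues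 ($\beta_j(\lambda)<0,=0,>0$ for $\lambda<,=,>\lambda_c$, $j\le m$; $\beta_j(\lambda_c)<0$ for $j>m$); $\Lambda_{2k}\ni\lambda_c$ open with $0>2k\inf_{\Lambda_{2k}}\inf_{j\le m}\beta_j>\sup_{\Lambda_{2k}}\sup_{j>m}\beta_j$. $\mathcal H^{\mathfrak c}=\mathrm{span}\{e_1,\dots,e_m\}$, $P_{\mathfrak c},P_{\mathfrak s}$ the orthogonal spectral projectors, $L^{\mathfrak c}_\lambda=L_\lambda P_{\mathfrak c}$, $L^{\mathfrak s}_\lambda=L_\lambda P_{\mathfrak s}$. The $O(\cdot)$ is the usual Landau notation (a bound by a constant times $|\beta_*(\lambda)|\|\xi\|_\alpha^k$). *)

theory Defs
  imports "HOL-Analysis.Analysis"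
begin

text \<open>Spectral setting: for each parameter value lam, the self-adjoint operator L_lam has
  the Hilbert basis of eigenvectors e lam 0, e lam 1, ... (0-indexed) with eigenvalues
  beta lam 0 \<ge> beta lam 1 \<ge> ...  The first m modes (indices j < m) are critical.\<close>

definition hilbert_basis :: "(nat \<Rightarrow> 'a::{real_inner,complete_space}) \<Rightarrow> bool" where
  "hilbert_basis b \<longleftrightarrow> (\<forall>i j. inner (b i) (b j) = (if i = j then 1 else 0)) \<and>
     (\<forall>u. (\<lambda>n. \<Sum>j<n. inner u (b j) *\<^sub>R b j) \<longlonglongrightarrow> u)"

definition dom_L :: "(nat \<Rightarrow> 'a::{real_inner,complete_space}) \<Rightarrow> (nat \<Rightarrow> real) \<Rightarrow> 'a set" where
  "dom_L b \<beta> = {u. summable (\<lambda>j. (\<beta> j * inner u (b j))\<^sup>2)}"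

definition op_L :: "(nat \<Rightarrow> 'a::{real_inner,complete_space}) \<Rightarrow> (nat \<Rightarrow> real) \<Rightarrow> 'a \<Rightarrow> 'a" where
  "op_L b \<beta> u = (\<Sum>j. (\<beta> j * inner u (b j)) *\<^sub>R b j)"

definition center_space :: "(nat \<Rightarrow> 'a::{real_inner,complete_space}) \<Rightarrow> nat \<Rightarrow> 'a set" where
  "center_space b m = span (b ` {..<m})"

definition proj_s :: "(nat \<Rightarrow> 'a::{real_inner,complete_space}) \<Rightarrow> nat \<Rightarrow> 'a \<Rightarrow> 'a" where
  "proj_s b m u = (\<Sum>j. (if m \<le> j then inner u (b j) else 0) *\<^sub>R b j)"

definition exp_Ls :: "(nat \<Rightarrow> 'a::{real_inner,complete_space}) \<Rightarrow> (nat \<Rightarrow> real) \<Rightarrow> nat \<Rightarrow> real \<Rightarrow> 'a \<Rightarrow> 'a" where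
  "exp_Ls b \<beta> m t u = (\<Sum>j. (if m \<le> j then exp (t * \<beta> j) * inner u (b j) else 0) *\<^sub>R b j)"

definition exp_Lc :: "(nat \<Rightarrow> 'a::{real_inner,complete_space}) \<Rightarrow> (nat \<Rightarrow> real) \<Rightarrow> nat \<Rightarrow> real \<Rightarrow> 'a \<Rightarrow> 'a" where
  "exp_Lc b \<beta> m t u = (\<Sum>j<m. (exp (t * \<beta> j) * inner u (b j)) *\<^sub>R b j)"

text \<open>(-L^s)^{-1} on the range of P_s (extended by P_s to all of H).\<close>
definition inv_neg_Ls :: "(nat \<Rightarrow> 'a::{real_inner,complete_space}) \<Rightarrow> (nat \<Rightarrow> real) \<Rightarrow> nat \<Rightarrow> 'a \<Rightarrow> 'a" where
  "inv_neg_Ls b \<beta> m u = (\<Sum>j. (if m \<le> j then - inner u (b j) / \<beta> j else 0) *\<^sub>R b j)"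

text \<open>A function of k arguments (arguments indexed by i < k) which is k-linear on the
  subspace H_alpha and bounded w.r.t. the alpha-norm nrm u = norm (A^alpha u).\<close>
definition bounded_klinear_on ::
  "nat \<Rightarrow> 'a::real_normed_vector set \<Rightarrow> ('a \<Rightarrow> real) \<Rightarrow> ((nat \<Rightarrow> 'a) \<Rightarrow> 'b::real_normed_vector) \<Rightarrow> bool" where
  "bounded_klinear_on k S nrm G \<longleftrightarrow>
     (\<forall>us vs. (\<forall>i<k. us i = vs i) \<longrightarrow> G us = G vs) \<and>
     (\<forall>us i x y a c. (\<forall>l<k. us l \<in> S) \<longrightarrow> i < k \<longrightarrow> x \<in> S \<longrightarrow> y \<in> S \<longrightarrow>
         G (us(i := a *\<^sub>R x + c *\<^sub>R y)) = a *\<^sub>R G (us(i := x)) + c *\<^sub>R G (us(i := y))) \<and>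
     (\<exists>M. \<forall>us. (\<forall>l<k. us l \<in> S) \<longrightarrow> norm (G us) \<le> M * (\<Prod>l<k. nrm (us l)))"

end

theory Submission
  imports Defs
begin

text \<open>On the centre space all critical eigenvalues equal \<beta>, so exp(s L_c) \<xi> = exp(s \<beta>) \<xi>, and by
  k-homogeneity the j-th stable mode of the integrand is exp(s (k \<beta> - \<beta>_j)) v_j with v = F_k(\<xi>).
  Integrating mode by mode over (-\<infinity>, 0] gives v_j / (k \<beta> - \<beta>_j), the resolvent gives -v_j / \<beta>_j,
  and their difference k \<beta> v_j / ((k \<beta> - \<beta>_j) \<beta>_j) carries the factor \<beta>. The spectral gap bounds
  this difference and its image under L by a multiple of |\<beta>| norm v, and the embedding of the
  domain of L into H_\<alpha> turns this into the \<alpha>-norm estimate.\<close>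

section \<open>Orthonormal series\<close>

definition orthonormal_seq :: "(nat \<Rightarrow> 'a::real_inner) \<Rightarrow> bool" where
  "orthonormal_seq b \<longleftrightarrow> (\<forall>i j. inner (b i) (b j) = (if i = j then 1 else 0))"

lemma orthonormal_seq_shift: "orthonormal_seq b \<Longrightarrow> orthonormal_seq (\<lambda>j. b (j + N))"
  unfolding orthonormal_seq_def by simp

lemma hilbert_basis_orthonormal_seq: "hilbert_basis b \<Longrightarrow> orthonormal_seq b"
  unfolding hilbert_basis_def orthonormal_seq_def by blast

lemma norm_orthonormal_sum_sq:
  assumes "orthonormal_seq b" "finite F"
  shows "norm (\<Sum>j\<in>F. c j *\<^sub>R b j)^2 = (\<Sum>j\<in>F. (c j)^2)"
proof -
  have "norm (\<Sum>j\<in>F. c j *\<^sub>R b j)^2 = (\<Sum>i\<in>F. c i * (\<Sum>j\<in>F. c j * inner (b j) (b i)))"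
    by (simp add: power2_norm_eq_inner inner_sum_left inner_sum_right)
  also have "\<dots> = (\<Sum>j\<in>F. (c j)^2)"
    using assms by (simp add: orthonormal_seq_def power2_eq_square if_distrib[of "\<lambda>x. _ * x"] cong: if_cong)
  finally show ?thesis .
qed

lemma summable_orthonormal_series:
  fixes b :: "nat \<Rightarrow> 'a::{real_inner,complete_space}"
  assumes ON: "orthonormal_seq b" and c: "summable (\<lambda>j. (c j)^2)"
  shows "summable (\<lambda>j. c j *\<^sub>R b j)"
proof -
  have "Cauchy (\<lambda>n. \<Sum>j<n. c j *\<^sub>R b j)"
  proof (rule metric_CauchyI)
    fix e :: real assume "0 < e"
    then obtain N where N: "\<forall>p\<ge>N. \<forall>q. norm (\<Sum>j=p..<q. (c j)^2) < e^2"
      using c by (meson summable_Cauchy zero_less_power)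
    have "dist (\<Sum>j<p. c j *\<^sub>R b j) (\<Sum>j<q. c j *\<^sub>R b j) < e" if "N \<le> p" "p \<le> q" for p q
    proof -
      have "(\<Sum>j<q. c j *\<^sub>R b j) = (\<Sum>j<p. c j *\<^sub>R b j) + (\<Sum>j=p..<q. c j *\<^sub>R b j)"
        using that by (metis sum.atLeastLessThan_concat lessThan_atLeast0 le0)
      then have "dist (\<Sum>j<p. c j *\<^sub>R b j) (\<Sum>j<q. c j *\<^sub>R b j) = norm (\<Sum>j=p..<q. c j *\<^sub>R b j)"
        by (simp add: dist_norm norm_minus_commute)
      moreover have "norm (\<Sum>j=p..<q. c j *\<^sub>R b j)^2 < e^2"
        using N that norm_orthonormal_sum_sq[OF ON, of "{p..<q}" c] by (auto simp: sum_nonneg)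
      ultimately show ?thesis using \<open>0 < e\<close> by (simp add: power_less_imp_less_base)
    qed
    then show "\<exists>M. \<forall>p\<ge>M. \<forall>q\<ge>M. dist (\<Sum>j<p. c j *\<^sub>R b j) (\<Sum>j<q. c j *\<^sub>R b j) < e"
      by (metis dist_commute nle_le)
  qed
  then show ?thesis by (simp add: summable_iff_convergent Cauchy_convergent_iff)
qed

lemma inner_orthonormal_series:
  fixes b :: "nat \<Rightarrow> 'a::{real_inner,complete_space}"
  assumes ON: "orthonormal_seq b" and c: "summable (\<lambda>j. (c j)^2)"
  shows "inner (\<Sum>j. c j *\<^sub>R b j) (b i) = c i"
proof -
  have "inner (\<Sum>j. c j *\<^sub>R b j) (b i) = (\<Sum>j. inner (c j *\<^sub>R b j) (b i))"
    by (rule bounded_linear.suminf[OF bounded_linear_inner_left summable_orthonormal_series[OF ON c]])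
  also have "\<dots> = (\<Sum>j. if j = i then c i else 0)"
    using ON by (simp add: orthonormal_seq_def if_distrib[of "\<lambda>x. _ * x"] cong: if_cong)
  also have "\<dots> = c i" using sums_single[of i "\<lambda>_. c i"] by (simp add: sums_iff)
  finally show ?thesis .
qed

lemma norm_orthonormal_series_sq:
  fixes b :: "nat \<Rightarrow> 'a::{real_inner,complete_space}"
  assumes ON: "orthonormal_seq b" and c: "summable (\<lambda>j. (c j)^2)"
  shows "norm (\<Sum>j. c j *\<^sub>R b j)^2 = (\<Sum>j. (c j)^2)"
proof (rule LIMSEQ_unique)
  have "(\<lambda>n. \<Sum>j<n. c j *\<^sub>R b j) \<longlonglongrightarrow> (\<Sum>j. c j *\<^sub>R b j)"
    using summable_orthonormal_series[OF ON c] by (rule summable_LIMSEQ)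
  then show "(\<lambda>n. norm (\<Sum>j<n. c j *\<^sub>R b j)^2) \<longlonglongrightarrow> norm (\<Sum>j. c j *\<^sub>R b j)^2"
    by (intro tendsto_intros)
  show "(\<lambda>n. norm (\<Sum>j<n. c j *\<^sub>R b j)^2) \<longlonglongrightarrow> (\<Sum>j. (c j)^2)"
    using summable_LIMSEQ[OF c] by (simp add: norm_orthonormal_sum_sq[OF ON])
qed

lemma summable_sq_dominated:
  fixes c d :: "nat \<Rightarrow> real"
  assumes c: "summable (\<lambda>j. (c j)^2)" and d: "\<And>j. \<bar>d j\<bar> \<le> L * \<bar>c j\<bar>"
  shows "summable (\<lambda>j. (d j)^2)"
proof (rule summable_comparison_test)
  show "summable (\<lambda>j. L^2 * (c j)^2)" using c by (rule summable_mult)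
  show "\<exists>N. \<forall>j\<ge>N. norm ((d j)^2) \<le> L^2 * (c j)^2"
    using power_mono[OF d abs_ge_zero, of _ 2] by (simp add: power_mult_distrib)
qed

lemma norm_orthonormal_series_le:
  fixes b :: "nat \<Rightarrow> 'a::{real_inner,complete_space}"
  assumes ON: "orthonormal_seq b" and c: "summable (\<lambda>j. (c j)^2)"
    and d: "\<And>j. \<bar>d j\<bar> \<le> L * \<bar>c j\<bar>" and L: "0 \<le> L"
  shows "norm (\<Sum>j. d j *\<^sub>R b j) \<le> L * sqrt (\<Sum>j. (c j)^2)"
proof (rule power2_le_imp_le)
  have sd: "summable (\<lambda>j. (d j)^2)" using c d by (rule summable_sq_dominated)
  have "norm (\<Sum>j. d j *\<^sub>R b j)^2 = (\<Sum>j. (d j)^2)" by (rule norm_orthonormal_series_sq[OF ON sd])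
  also have "\<dots> \<le> (\<Sum>j. L^2 * (c j)^2)"
    using power_mono[OF d abs_ge_zero, of _ 2] sd summable_mult[OF c]
    by (intro suminf_le) (auto simp: power_mult_distrib)
  also have "\<dots> = (L * sqrt (\<Sum>j. (c j)^2))^2"
    using suminf_nonneg[OF c] by (simp add: suminf_mult[OF c] power_mult_distrib)
  finally show "norm (\<Sum>j. d j *\<^sub>R b j)^2 \<le> (L * sqrt (\<Sum>j. (c j)^2))^2" .
  show "0 \<le> L * sqrt (\<Sum>j. (c j)^2)" using L suminf_nonneg[OF c] by simp
qed

lemma norm_orthonormal_series_tail_le:
  fixes b :: "nat \<Rightarrow> 'a::{real_inner,complete_space}"
  assumes ON: "orthonormal_seq b" and c: "summable (\<lambda>j. (c j)^2)"
    and d: "\<And>j. \<bar>d j\<bar> \<le> L * \<bar>c j\<bar>" and L: "0 \<le> L"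
  shows "norm ((\<Sum>j. d j *\<^sub>R b j) - (\<Sum>j<N. d j *\<^sub>R b j)) \<le> L * sqrt (\<Sum>j. (c (j + N))^2)"
proof -
  have "summable (\<lambda>j. d j *\<^sub>R b j)"
    by (rule summable_orthonormal_series[OF ON summable_sq_dominated[OF c d]])
  from suminf_minus_initial_segment[OF this, of N]
  have "(\<Sum>j. d j *\<^sub>R b j) - (\<Sum>j<N. d j *\<^sub>R b j) = (\<Sum>j. d (j + N) *\<^sub>R b (j + N))"
    by simp
  also have "norm \<dots> \<le> L * sqrt (\<Sum>j. (c (j + N))^2)"
    using orthonormal_seq_shift[OF ON] c d L summable_iff_shift[of "\<lambda>j. (c j)^2" N]
    by (intro norm_orthonormal_series_le) auto
  finally show ?thesis .
qed

lemma hilbert_basis_sums: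
  "hilbert_basis b \<Longrightarrow> (\<lambda>j. inner u (b j) *\<^sub>R b j) sums u"
  unfolding hilbert_basis_def sums_def by blast

lemma hilbert_basis_parseval:
  fixes b :: "nat \<Rightarrow> 'a::{real_inner,complete_space}"
  assumes hb: "hilbert_basis b"
  shows "(\<lambda>j. (inner u (b j))^2) sums (norm u ^ 2)"
proof -
  have "(\<lambda>n. norm (\<Sum>j<n. inner u (b j) *\<^sub>R b j)^2) \<longlonglongrightarrow> norm u ^ 2"
    using hilbert_basis_sums[OF hb, of u] unfolding sums_def by (intro tendsto_intros)
  then show ?thesis
    by (simp add: sums_def norm_orthonormal_sum_sq[OF hilbert_basis_orthonormal_seq[OF hb]])
qed

section \<open>Improper integrals of exponentially damped series\<close>

lemma has_integral_uniform_approx: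
  fixes f :: "'a::euclidean_space \<Rightarrow> 'b::real_normed_vector"
  assumes approx: "\<And>e. e > 0 \<Longrightarrow> \<exists>g I. (\<forall>x\<in>cbox a b. norm (f x - g x) \<le> e) \<and>
      (g has_integral I) (cbox a b) \<and> norm (I - y) \<le> e"
  shows "(f has_integral y) (cbox a b)"
  unfolding has_integral
proof (intro allI impI)
  fix \<epsilon> :: real assume "\<epsilon> > 0"
  define C where "C = measure lborel (cbox a b)"
  define e where "e = \<epsilon> / (3 * (C + 1))"
  have "0 \<le> C" by (simp add: C_def)
  then have "e > 0" "e * C < \<epsilon>/3" "e \<le> \<epsilon>/3"
    using \<open>\<epsilon> > 0\<close> unfolding e_def by (auto simp: field_simps)
  then obtain g I where g: "\<forall>x\<in>cbox a b. norm (f x - g x) \<le> e" "(g has_integral I) (cbox a b)"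
      and I: "norm (I - y) \<le> e"
    using approx by blast
  obtain \<gamma> where \<gamma>: "gauge \<gamma>" "\<And>\<D>. \<D> tagged_division_of (cbox a b) \<and> \<gamma> fine \<D> \<Longrightarrow>
      norm ((\<Sum>(x, k)\<in>\<D>. measure lborel k *\<^sub>R g x) - I) < \<epsilon>/3"
    using g(2) \<open>\<epsilon> > 0\<close> unfolding has_integral by (meson zero_less_divide_iff zero_less_numeral)
  have "norm ((\<Sum>(x, k)\<in>\<D>. measure lborel k *\<^sub>R f x) - y) < \<epsilon>"
    if D: "\<D> tagged_division_of cbox a b \<and> \<gamma> fine \<D>" for \<D>
  proof -
    have "(\<Sum>(x, k)\<in>\<D>. measure lborel k *\<^sub>R f x) - y = (\<Sum>(x, k)\<in>\<D>. measure lborel k *\<^sub>R (f x - g x))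
        + ((\<Sum>(x, k)\<in>\<D>. measure lborel k *\<^sub>R g x) - I) + (I - y)" (is "_ = ?X + ?Y + ?Z")
      by (simp add: scaleR_diff_right sum_subtractf case_prod_unfold)
    then have "norm ((\<Sum>(x, k)\<in>\<D>. measure lborel k *\<^sub>R f x) - y) \<le> norm ?X + norm ?Y + norm ?Z"
      using norm_triangle_ineq[of "?X + ?Y" ?Z] norm_triangle_ineq[of ?X ?Y] by simp
    moreover have "norm (\<Sum>(x, k)\<in>\<D>. measure lborel k *\<^sub>R (f x - g x)) \<le> e * C"
      using D g(1) unfolding C_def by (intro rsum_bound) auto
    ultimately show ?thesis
      using \<open>e * C < \<epsilon>/3\<close> \<open>e \<le> \<epsilon>/3\<close> \<gamma>(2)[OF D] I by linarith
  qed
  with \<gamma>(1) show "\<exists>\<gamma>. gauge \<gamma> \<and> (\<forall>\<D>. \<D> tagged_division_of cbox a b \<and> \<gamma> fine \<D> \<longrightarrow>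
      norm ((\<Sum>(x, k)\<in>\<D>. measure lborel k *\<^sub>R f x) - y) < \<epsilon>)"
    by blast
qed

lemma has_integral_nonpos_halfline:
  fixes f :: "real \<Rightarrow> 'b::real_normed_vector"
  assumes I: "\<And>a b. a \<le> 0 \<Longrightarrow> 0 \<le> b \<Longrightarrow> ((\<lambda>x. if x \<in> {..0} then f x else 0) has_integral I a) {a..b}"
    and lim: "(I \<longlongrightarrow> y) at_bot"
  shows "(f has_integral y) {..0}"
proof -
  have not_box: "\<nexists>a b. {..0::real} = cbox a b"
  proof
    assume "\<exists>a b. {..0::real} = cbox a b"
    then obtain a b where "{..0::real} = cbox a b" by blast
    then have "min a 0 - 1 \<in> cbox a b" by auto
    then show False by (simp add: min_def split: if_splits)
  qed
  show ?thesis
  proof (subst has_integral_alt, subst if_not_P[OF not_box], intro allI impI)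
    fix \<epsilon> :: real assume "\<epsilon> > 0"
    then obtain Z where Z: "\<And>a. a \<le> Z \<Longrightarrow> norm (I a - y) < \<epsilon>"
      using lim unfolding tendsto_iff eventually_at_bot_linorder dist_norm by blast
    define B where "B = max 1 (- Z)"
    have "(\<exists>z. ((\<lambda>x. if x \<in> {..0} then f x else 0) has_integral z) (cbox a b) \<and> norm (z - y) < \<epsilon>)"
      if sub: "ball 0 B \<subseteq> cbox a b" for a b
    proof -
      have "B > 0" by (simp add: B_def)
      then have "0 \<in> ball (0::real) B" by simp
      then have "0 \<in> cbox a b" using sub by blast
      then have "a \<le> 0" "0 \<le> b" by auto
      have "a \<le> - B"
      proof (rule ccontr)
        assume "\<not> a \<le> - B"
        then have "(a - B) / 2 \<in> ball 0 B" using \<open>a \<le> 0\<close> by (auto simp: dist_real_def)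
        then show False using subsetD[OF sub] \<open>\<not> a \<le> - B\<close> by fastforce
      qed
      then show ?thesis using I[OF \<open>a \<le> 0\<close> \<open>0 \<le> b\<close>] Z[of a] by (auto simp: B_def)
    qed
    then show "\<exists>B>0. \<forall>a b. ball 0 B \<subseteq> cbox a b \<longrightarrow>
        (\<exists>z. ((\<lambda>x. if x \<in> {..0} then f x else 0) has_integral z) (cbox a b) \<and> norm (z - y) < \<epsilon>)"
      by (intro exI[of _ B]) (auto simp: B_def)
  qed
qed

lemma has_integral_exp_restrict:
  fixes \<mu> c a b :: real
  assumes "0 < \<mu>" "a \<le> 0" "0 \<le> b"
  shows "((\<lambda>x. if x \<in> {..0} then exp (x * \<mu>) * c else 0) has_integral (c * (1 - exp (a * \<mu>)) / \<mu>)) {a..b}"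
proof -
  have "((\<lambda>x. exp (x * \<mu>) * c) has_integral (c * exp (0 * \<mu>) / \<mu> - c * exp (a * \<mu>) / \<mu>)) {a..0}"
    using assms
    by (intro fundamental_theorem_of_calculus)
       (auto intro!: derivative_eq_intros simp flip: has_real_derivative_iff_has_vector_derivative)
  then have "((\<lambda>x. if x \<in> {a..0} then exp (x * \<mu>) * c else 0) has_integral (c * (1 - exp (a * \<mu>)) / \<mu>)) {a..b}"
    using assms by (subst has_integral_restrict) (auto simp: diff_divide_distrib right_diff_distrib)
  then show ?thesis by (rule has_integral_eq[rotated]) auto
qed

lemma exp_mult_divide_le:
  fixes a \<delta> \<mu> :: real
  assumes "a \<le> 0" "0 < \<delta>" "\<delta> \<le> \<mu>"
  shows "exp (a * \<mu>) / \<mu> \<le> exp (a * \<delta>) / \<delta>"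
proof -
  have "exp (a * \<mu>) \<le> exp (a * \<delta>)" using assms by (simp add: mult_left_mono_neg)
  then show ?thesis using assms by (meson exp_gt_zero frac_le less_imp_le)
qed

lemma abs_exp_primitive_le:
  fixes a \<delta> \<mu> c :: real
  assumes "a \<le> 0" "0 < \<delta>" "\<delta> \<le> \<mu>"
  shows "\<bar>c * (1 - exp (a * \<mu>)) / \<mu>\<bar> \<le> 1 / \<delta> * \<bar>c\<bar>"
proof -
  have e: "0 < exp (a * \<mu>)" "exp (a * \<mu>) \<le> 1"
    using assms by (auto simp: mult_nonpos_nonneg)
  then have "\<bar>c * (1 - exp (a * \<mu>)) / \<mu>\<bar> = \<bar>c\<bar> * (1 - exp (a * \<mu>)) / \<mu>"
    using assms by (simp add: abs_mult)
  also have "\<dots> \<le> \<bar>c\<bar> / \<mu>"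
    using e assms by (intro divide_right_mono mult_right_le_one_le) auto
  also have "\<dots> \<le> \<bar>c\<bar> / \<delta>"
    using assms by (intro divide_left_mono) auto
  finally show ?thesis by simp
qed

lemma summable_sq_tail_less:
  fixes c :: "nat \<Rightarrow> real"
  assumes "summable (\<lambda>j. (c j)^2)" "0 < r"
  obtains N where "sqrt (\<Sum>j. (c (j + N))^2) < r"
proof -
  from suminf_exist_split[OF zero_less_power[OF assms(2)] assms(1)] obtain N
    where "norm (\<Sum>j. (c (j + N))^2) < r^2" by blast
  then have "sqrt (\<Sum>j. (c (j + N))^2) < sqrt (r^2)"
    by (metis abs_ge_self le_less_trans real_norm_def real_sqrt_less_iff)
  with assms(2) show ?thesis using that by simp
qed

lemma has_integral_exp_orthonormal_series_interval:
  fixes b :: "nat \<Rightarrow> 'a::{real_inner,complete_space}"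
  assumes ON: "orthonormal_seq b" and c: "summable (\<lambda>j. (c j)^2)"
    and \<delta>: "0 < \<delta>" and \<mu>: "\<And>j. \<delta> \<le> \<mu> j" and ab: "a \<le> 0" "0 \<le> b'"
  shows "((\<lambda>s. if s \<in> {..0} then \<Sum>j. (exp (s * \<mu> j) * c j) *\<^sub>R b j else 0)
    has_integral (\<Sum>j. (c j * (1 - exp (a * \<mu> j)) / \<mu> j) *\<^sub>R b j)) {a..b'}"
  unfolding box_real(2)[symmetric]
proof (rule has_integral_uniform_approx)
  fix e :: real assume "e > 0"
  then obtain N where tail: "sqrt (\<Sum>j. (c (j + N))^2) < min e (e * \<delta>)"
    using summable_sq_tail_less[OF c, of "min e (e * \<delta>)"] \<delta> by auto
  have \<mu>_pos: "0 < \<mu> j" for j using \<delta> \<mu>[of j] by linarith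
  define g where "g s = (\<Sum>j<N. (if s \<in> {..0} then exp (s * \<mu> j) * c j else 0) *\<^sub>R b j)" for s
  define J where "J = (\<Sum>j<N. (c j * (1 - exp (a * \<mu> j)) / \<mu> j) *\<^sub>R b j)"
  have "(g has_integral J) (cbox a b')"
    unfolding g_def J_def box_real(2)
    by (intro has_integral_sum has_integral_scaleR_left has_integral_exp_restrict \<mu>_pos ab) auto
  moreover have "norm ((if s \<in> {..0} then \<Sum>j. (exp (s * \<mu> j) * c j) *\<^sub>R b j else 0) - g s) \<le> e" for s
  proof (cases "s \<le> 0")
    case True
    then have "\<bar>exp (s * \<mu> j) * c j\<bar> \<le> 1 * \<bar>c j\<bar>" for j
      using \<mu>_pos[of j] by (simp add: abs_mult mult_nonpos_nonneg mult_left_le_one_le)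
    then have "norm ((\<Sum>j. (exp (s * \<mu> j) * c j) *\<^sub>R b j) - (\<Sum>j<N. (exp (s * \<mu> j) * c j) *\<^sub>R b j))
        \<le> 1 * sqrt (\<Sum>j. (c (j + N))^2)"
      by (intro norm_orthonormal_series_tail_le[OF ON c]) auto
    then show ?thesis using True tail by (simp add: g_def)
  qed (use \<open>e > 0\<close> in \<open>simp add: g_def\<close>)
  moreover have "norm (J - (\<Sum>j. (c j * (1 - exp (a * \<mu> j)) / \<mu> j) *\<^sub>R b j)) \<le> e"
  proof -
    have "norm ((\<Sum>j. (c j * (1 - exp (a * \<mu> j)) / \<mu> j) *\<^sub>R b j) - J)
        \<le> 1 / \<delta> * sqrt (\<Sum>j. (c (j + N))^2)"
      unfolding J_def
      by (intro norm_orthonormal_series_tail_le[OF ON c] abs_exp_primitive_le ab \<delta> \<mu>) (use \<delta> in auto)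
    also have "\<dots> \<le> e" using tail \<delta> by (simp add: field_simps)
    finally show ?thesis by (simp add: norm_minus_commute)
  qed
  ultimately show "\<exists>g J. (\<forall>s\<in>cbox a b'.
        norm ((if s \<in> {..0} then \<Sum>j. (exp (s * \<mu> j) * c j) *\<^sub>R b j else 0) - g s) \<le> e)
      \<and> (g has_integral J) (cbox a b')
      \<and> norm (J - (\<Sum>j. (c j * (1 - exp (a * \<mu> j)) / \<mu> j) *\<^sub>R b j)) \<le> e"
    by blast
qed

lemma tendsto_exp_orthonormal_series_primitive:
  fixes b :: "nat \<Rightarrow> 'a::{real_inner,complete_space}"
  assumes ON: "orthonormal_seq b" and c: "summable (\<lambda>j. (c j)^2)"
    and \<delta>: "0 < \<delta>" and \<mu>: "\<And>j. \<delta> \<le> \<mu> j"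
  shows "((\<lambda>a. \<Sum>j. (c j * (1 - exp (a * \<mu> j)) / \<mu> j) *\<^sub>R b j) \<longlongrightarrow> (\<Sum>j. (c j / \<mu> j) *\<^sub>R b j)) at_bot"
proof (rule Lim_null[THEN iffD2], rule Lim_null_comparison)
  define S where "S = sqrt (\<Sum>j. (c j)^2)"
  have \<mu>_pos: "0 < \<mu> j" for j using \<delta> \<mu>[of j] by linarith
  have "norm ((\<Sum>j. (c j * (1 - exp (a * \<mu> j)) / \<mu> j) *\<^sub>R b j) - (\<Sum>j. (c j / \<mu> j) *\<^sub>R b j))
      \<le> exp (a * \<delta>) / \<delta> * S" if "a \<le> 0" for a
  proof -
    have coeff: "\<bar>c j * (1 - exp (a * \<mu> j)) / \<mu> j - c j / \<mu> j\<bar> \<le> exp (a * \<delta>) / \<delta> * \<bar>c j\<bar>" for j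
    proof -
      have "\<bar>c j * (1 - exp (a * \<mu> j)) / \<mu> j - c j / \<mu> j\<bar> = \<bar>c j\<bar> * (exp (a * \<mu> j) / \<mu> j)"
        using \<mu>_pos[of j] by (simp add: field_simps abs_mult)
      also have "\<dots> \<le> \<bar>c j\<bar> * (exp (a * \<delta>) / \<delta>)"
        using exp_mult_divide_le[OF that \<delta> \<mu>[of j]] by (rule mult_left_mono) simp
      finally show ?thesis by (simp add: mult.commute)
    qed
    have primitive: "\<bar>c j * (1 - exp (a * \<mu> j)) / \<mu> j\<bar> \<le> 1 / \<delta> * \<bar>c j\<bar>" for j
      by (rule abs_exp_primitive_le[OF that \<delta> \<mu>])
    have quotient: "\<bar>c j / \<mu> j\<bar> \<le> 1 / \<delta> * \<bar>c j\<bar>" for j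
      using \<mu>[of j] \<delta> \<mu>_pos[of j] by (simp add: abs_divide divide_left_mono)
    have "(\<Sum>j. (c j * (1 - exp (a * \<mu> j)) / \<mu> j) *\<^sub>R b j) - (\<Sum>j. (c j / \<mu> j) *\<^sub>R b j)
        = (\<Sum>j. (c j * (1 - exp (a * \<mu> j)) / \<mu> j - c j / \<mu> j) *\<^sub>R b j)"
      unfolding scaleR_diff_left
      using summable_sq_dominated[OF c primitive] summable_sq_dominated[OF c quotient]
      by (intro suminf_diff summable_orthonormal_series[OF ON])
    also have "norm \<dots> \<le> exp (a * \<delta>) / \<delta> * S"
      unfolding S_def by (intro norm_orthonormal_series_le[OF ON c coeff]) (use \<delta> in auto)
    finally show ?thesis .
  qed
  then show "\<forall>\<^sub>F a in at_bot. norm ((\<Sum>j. (c j * (1 - exp (a * \<mu> j)) / \<mu> j) *\<^sub>R b j)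
      - (\<Sum>j. (c j / \<mu> j) *\<^sub>R b j)) \<le> exp (a * \<delta>) / \<delta> * S"
    by (auto simp: eventually_at_bot_linorder)
  have "filterlim (\<lambda>a. a * \<delta>) at_bot at_bot"
    using filterlim_tendsto_pos_mult_at_bot[OF tendsto_const \<delta> filterlim_ident]
    by (simp add: mult.commute)
  then have "((\<lambda>a. exp (a * \<delta>)) \<longlongrightarrow> 0) at_bot"
    by (rule filterlim_compose[OF exp_at_bot])
  then show "((\<lambda>a. exp (a * \<delta>) / \<delta> * S) \<longlongrightarrow> 0) at_bot"
    by (auto intro: tendsto_mult_left_zero tendsto_divide_zero)
qed

lemma has_integral_exp_orthonormal_series:
  fixes b :: "nat \<Rightarrow> 'a::{real_inner,complete_space}"
  assumes ON: "orthonormal_seq b" and c: "summable (\<lambda>j. (c j)^2)"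
    and \<delta>: "0 < \<delta>" and \<mu>: "\<And>j. \<delta> \<le> \<mu> j"
  shows "((\<lambda>s. \<Sum>j. (exp (s * \<mu> j) * c j) *\<^sub>R b j) has_integral (\<Sum>j. (c j / \<mu> j) *\<^sub>R b j)) {..0}"
  using has_integral_exp_orthonormal_series_interval[OF ON c \<delta> \<mu>]
    tendsto_exp_orthonormal_series_primitive[OF ON c \<delta> \<mu>]
  by (rule has_integral_nonpos_halfline)

section \<open>Spectral calculus in the eigenbasis\<close>

lemma bounded_klinear_on_diag_scaleR:
  assumes G: "bounded_klinear_on k S nrm G" and S: "subspace S" and x: "x \<in> S"
  shows "G (\<lambda>_. t *\<^sub>R x) = t^k *\<^sub>R G (\<lambda>_. x)"
proof -
  have agree: "\<And>us vs. (\<forall>i<k. us i = vs i) \<Longrightarrow> G us = G vs"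
    and lin: "\<And>us i x y a c. (\<forall>l<k. us l \<in> S) \<Longrightarrow> i < k \<Longrightarrow> x \<in> S \<Longrightarrow> y \<in> S \<Longrightarrow>
      G (us(i := a *\<^sub>R x + c *\<^sub>R y)) = a *\<^sub>R G (us(i := x)) + c *\<^sub>R G (us(i := y))"
    using G unfolding bounded_klinear_on_def by blast+
  have tx: "t *\<^sub>R x \<in> S" using S x by (rule subspace_scale)
  have "G (\<lambda>i. if i < n then t *\<^sub>R x else x) = t^n *\<^sub>R G (\<lambda>_. x)" if "n \<le> k" for n
    using that
  proof (induction n)
    case (Suc n)
    define us where "us = (\<lambda>i. if i < n then t *\<^sub>R x else x)"
    have "\<forall>l<k. us l \<in> S" using tx x by (simp add: us_def)
    moreover have "us(n := x) = us" by (auto simp: us_def)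
    ultimately have "G (us(n := t *\<^sub>R x)) = t *\<^sub>R G us"
      using lin[of us n x x t 0] Suc.prems x by simp
    moreover have "us(n := t *\<^sub>R x) = (\<lambda>i. if i < Suc n then t *\<^sub>R x else x)"
      by (auto simp: us_def)
    ultimately show ?case using Suc by (simp add: us_def)
  qed simp
  moreover have "G (\<lambda>i. if i < k then t *\<^sub>R x else x) = G (\<lambda>_. t *\<^sub>R x)" by (rule agree) simp
  ultimately show ?thesis by simp
qed

lemma center_space_expansion:
  assumes ON: "orthonormal_seq b" and \<xi>: "\<xi> \<in> center_space b m"
  shows "\<xi> = (\<Sum>j<m. inner \<xi> (b j) *\<^sub>R b j)"
  using \<xi> unfolding center_space_def
proof (induction rule: span_induct_alt)
  case (step c x y)
  then obtain i where i: "i < m" "x = b i" by auto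
  have "(\<Sum>j<m. inner (b i) (b j) *\<^sub>R b j) = (\<Sum>j<m. if i = j then b j else 0)"
    using ON unfolding orthonormal_seq_def by (intro sum.cong) auto
  then have "(\<Sum>j<m. inner (b i) (b j) *\<^sub>R b j) = b i" using i(1) by simp
  moreover have "(\<Sum>j<m. inner (c *\<^sub>R x + y) (b j) *\<^sub>R b j)
      = c *\<^sub>R (\<Sum>j<m. inner x (b j) *\<^sub>R b j) + (\<Sum>j<m. inner y (b j) *\<^sub>R b j)"
    by (simp add: inner_add_left scaleR_add_left sum.distrib scaleR_sum_right)
  ultimately show ?case using step.IH i(2) by simp
qed simp

lemma exp_Lc_constant_eigenvalue:
  assumes ON: "orthonormal_seq b" and crit: "\<And>j. j < m \<Longrightarrow> bt j = \<beta>"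
    and \<xi>: "\<xi> \<in> center_space b m"
  shows "exp_Lc b bt m s \<xi> = exp (s * \<beta>) *\<^sub>R \<xi>"
proof -
  have "exp_Lc b bt m s \<xi> = exp (s * \<beta>) *\<^sub>R (\<Sum>j<m. inner \<xi> (b j) *\<^sub>R b j)"
    unfolding exp_Lc_def scaleR_sum_right using crit by (intro sum.cong) auto
  then show ?thesis using center_space_expansion[OF ON \<xi>] by simp
qed

lemma orthonormal_seq_in_dom_L:
  assumes "orthonormal_seq b"
  shows "b j \<in> dom_L b bt"
proof -
  have "(\<lambda>i. (bt i * inner (b j) (b i))^2) = (\<lambda>i. if i = j then (bt j)^2 else 0)"
    using assms unfolding orthonormal_seq_def by auto
  then show ?thesis unfolding dom_L_def by (simp add: summable_single)
qed

lemma inner_proj_s: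
  fixes b :: "nat \<Rightarrow> 'a::{real_inner,complete_space}"
  assumes hb: "hilbert_basis b"
  shows "inner (proj_s b m u) (b j) = (if m \<le> j then inner u (b j) else 0)"
  unfolding proj_s_def
proof (rule inner_orthonormal_series[OF hilbert_basis_orthonormal_seq[OF hb]])
  have "summable (\<lambda>j. (inner u (b j))^2)"
    using hilbert_basis_parseval[OF hb, of u] by (simp add: sums_iff)
  then show "summable (\<lambda>j. (if m \<le> j then inner u (b j) else 0)^2)"
    by (rule summable_sq_dominated[where L=1]) simp
qed

lemma orthonormal_series_in_dom_L:
  fixes b :: "nat \<Rightarrow> 'a::{real_inner,complete_space}"
  assumes ON: "orthonormal_seq b" and d: "summable (\<lambda>j. (d j)^2)"
    and bd: "summable (\<lambda>j. (bt j * d j)^2)"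
  shows "(\<Sum>j. d j *\<^sub>R b j) \<in> dom_L b bt"
    and "op_L b bt (\<Sum>j. d j *\<^sub>R b j) = (\<Sum>j. (bt j * d j) *\<^sub>R b j)"
proof -
  have "inner (\<Sum>j. d j *\<^sub>R b j) (b i) = d i" for i by (rule inner_orthonormal_series[OF ON d])
  then show "(\<Sum>j. d j *\<^sub>R b j) \<in> dom_L b bt"
    and "op_L b bt (\<Sum>j. d j *\<^sub>R b j) = (\<Sum>j. (bt j * d j) *\<^sub>R b j)"
    using bd unfolding dom_L_def op_L_def by simp_all
qed

lemma integrand_on_center_space:
  fixes b :: "nat \<Rightarrow> 'a::{real_inner,complete_space}"
  assumes hb: "hilbert_basis b" and crit: "\<And>j. j < m \<Longrightarrow> bt j = \<beta>"
    and Fk: "bounded_klinear_on k H nrm Fk" and H: "subspace H" "center_space b m \<subseteq> H"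
    and \<xi>: "\<xi> \<in> center_space b m"
  shows "exp_Ls b bt m (- s) (proj_s b m (Fk (\<lambda>_. exp_Lc b bt m s \<xi>)))
    = (\<Sum>j. (if m \<le> j then exp (s * (real k * \<beta> - bt j)) * inner (Fk (\<lambda>_. \<xi>)) (b j) else 0) *\<^sub>R b j)"
proof -
  have "Fk (\<lambda>_. exp_Lc b bt m s \<xi>) = exp (real k * (s * \<beta>)) *\<^sub>R Fk (\<lambda>_. \<xi>)"
    using exp_Lc_constant_eigenvalue[OF hilbert_basis_orthonormal_seq[OF hb] crit \<xi>]
      bounded_klinear_on_diag_scaleR[OF Fk H(1)] \<xi> H(2) by (simp add: exp_of_nat_mult subsetD)
  moreover have "exp (- s * bt j) * (exp (real k * (s * \<beta>)) * x) = exp (s * (real k * \<beta> - bt j)) * x"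
    for j x
  proof -
    have "exp (s * (real k * \<beta> - bt j)) = exp (- s * bt j) * exp (real k * (s * \<beta>))"
      by (simp add: exp_add[symmetric] algebra_simps)
    then show ?thesis by (simp add: mult.assoc)
  qed
  ultimately show ?thesis
    unfolding exp_Ls_def inner_proj_s[OF hb] by (intro arg_cong[where f=suminf] ext) simp
qed

lemma inv_neg_Ls_proj_s:
  fixes b :: "nat \<Rightarrow> 'a::{real_inner,complete_space}"
  assumes "hilbert_basis b"
  shows "inv_neg_Ls b bt m (proj_s b m u) = (\<Sum>j. (if m \<le> j then - inner u (b j) / bt j else 0) *\<^sub>R b j)"
  unfolding inv_neg_Ls_def inner_proj_s[OF assms] by (intro arg_cong[where f=suminf] ext) simp

section \<open>The approximation error\<close>

lemma resolvent_correction_bounds: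
  fixes b :: "nat \<Rightarrow> 'a::{real_inner,complete_space}" and bt v :: "nat \<Rightarrow> real"
  assumes ON: "orthonormal_seq b" and v: "summable (\<lambda>j. (v j)^2)"
    and stable: "\<And>j. m \<le> j \<Longrightarrow> bt j \<le> bb" and bb: "bb < 0"
    and gap: "\<And>j. m \<le> j \<Longrightarrow> \<delta> \<le> r - bt j" and \<delta>: "0 < \<delta>"
  defines "d \<equiv> \<lambda>j. if m \<le> j then v j * r / ((r - bt j) * bt j) else 0"
  shows "(\<Sum>j. d j *\<^sub>R b j) \<in> dom_L b bt"
    and "norm (\<Sum>j. d j *\<^sub>R b j) \<le> \<bar>r\<bar> / (\<delta> * - bb) * sqrt (\<Sum>j. (v j)^2)"
    and "norm (op_L b bt (\<Sum>j. d j *\<^sub>R b j)) \<le> \<bar>r\<bar> / \<delta> * sqrt (\<Sum>j. (v j)^2)"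
proof -
  have "0 < \<delta> * - bb" using \<delta> bb by (simp add: mult_pos_neg)
  have d_le: "\<bar>d j\<bar> \<le> \<bar>r\<bar> / (\<delta> * - bb) * \<bar>v j\<bar>" for j
  proof (cases "m \<le> j")
    case True
    have "\<delta> * - bb \<le> (r - bt j) * \<bar>bt j\<bar>"
      using gap[OF True] stable[OF True] \<delta> bb by (intro mult_mono) auto
    moreover have "0 < r - bt j" using gap[OF True] \<delta> by linarith
    ultimately have "\<bar>r\<bar> * \<bar>v j\<bar> / ((r - bt j) * \<bar>bt j\<bar>) \<le> \<bar>r\<bar> * \<bar>v j\<bar> / (\<delta> * - bb)"
      using \<delta> bb stable[OF True] by (intro divide_left_mono mult_pos_pos) auto
    moreover have "\<bar>d j\<bar> = \<bar>r\<bar> * \<bar>v j\<bar> / ((r - bt j) * \<bar>bt j\<bar>)"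
      using True \<open>0 < r - bt j\<close> by (simp add: d_def abs_mult abs_divide mult.commute)
    ultimately show ?thesis by simp
  qed (use \<open>0 < \<delta> * - bb\<close> in \<open>simp add: d_def divide_nonneg_neg\<close>)
  have bd_le: "\<bar>bt j * d j\<bar> \<le> \<bar>r\<bar> / \<delta> * \<bar>v j\<bar>" for j
  proof (cases "m \<le> j")
    case True
    then have "bt j \<noteq> 0" "0 < r - bt j" using stable[OF True] bb gap[OF True] \<delta> by auto
    then have "\<bar>bt j * d j\<bar> = \<bar>v j\<bar> * \<bar>r\<bar> / (r - bt j)"
      using True by (simp add: d_def abs_mult abs_divide)
    also have "\<dots> \<le> \<bar>v j\<bar> * \<bar>r\<bar> / \<delta>"
      using gap[OF True] \<delta> by (intro divide_left_mono) auto
    finally show ?thesis by (simp add: field_simps)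
  qed (use \<delta> in \<open>simp add: d_def\<close>)
  have d: "summable (\<lambda>j. (d j)^2)" and bd: "summable (\<lambda>j. (bt j * d j)^2)"
    using summable_sq_dominated[OF v d_le] summable_sq_dominated[OF v bd_le] .
  show "(\<Sum>j. d j *\<^sub>R b j) \<in> dom_L b bt"
    by (rule orthonormal_series_in_dom_L(1)[OF ON d bd])
  show "norm (\<Sum>j. d j *\<^sub>R b j) \<le> \<bar>r\<bar> / (\<delta> * - bb) * sqrt (\<Sum>j. (v j)^2)"
    using \<open>0 < \<delta> * - bb\<close> by (intro norm_orthonormal_series_le[OF ON v d_le]) (simp add: divide_nonneg_neg)
  show "norm (op_L b bt (\<Sum>j. d j *\<^sub>R b j)) \<le> \<bar>r\<bar> / \<delta> * sqrt (\<Sum>j. (v j)^2)"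
    unfolding orthonormal_series_in_dom_L(2)[OF ON d bd]
    using \<delta> by (intro norm_orthonormal_series_le[OF ON v bd_le]) auto
qed

lemma has_integral_on_center_space:
  fixes b :: "nat \<Rightarrow> 'a::{real_inner,complete_space}"
  assumes hb: "hilbert_basis b" and crit: "\<And>j. j < m \<Longrightarrow> bt j = \<beta>"
    and Fk: "bounded_klinear_on k H nrm Fk" and H: "subspace H" "center_space b m \<subseteq> H"
    and \<xi>: "\<xi> \<in> center_space b m"
    and \<delta>: "0 < \<delta>" and gap: "\<And>j. m \<le> j \<Longrightarrow> \<delta> \<le> real k * \<beta> - bt j"
  shows "((\<lambda>s. exp_Ls b bt m (- s) (proj_s b m (Fk (\<lambda>_. exp_Lc b bt m s \<xi>)))) has_integral
    (\<Sum>j. (if m \<le> j then inner (Fk (\<lambda>_. \<xi>)) (b j) / (real k * \<beta> - bt j) else 0) *\<^sub>R b j)) {..0}"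
proof -
  define c where "c j = (if m \<le> j then inner (Fk (\<lambda>_. \<xi>)) (b j) else 0)" for j
  \<comment> \<open>The value of \<open>\<mu>\<close> on the critical modes is irrelevant, since \<open>c\<close> vanishes there.\<close>
  define \<mu> where "\<mu> j = (if m \<le> j then real k * \<beta> - bt j else \<delta>)" for j
  have "summable (\<lambda>j. (inner (Fk (\<lambda>_. \<xi>)) (b j))^2)"
    using hilbert_basis_parseval[OF hb] by (auto simp: sums_iff)
  then have c: "summable (\<lambda>j. (c j)^2)"
    by (rule summable_sq_dominated[where L=1]) (simp add: c_def)
  have \<mu>: "\<delta> \<le> \<mu> j" for j using gap by (simp add: \<mu>_def)
  have "exp_Ls b bt m (- s) (proj_s b m (Fk (\<lambda>_. exp_Lc b bt m s \<xi>)))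
      = (\<Sum>j. (exp (s * \<mu> j) * c j) *\<^sub>R b j)" for s
  proof -
    have "exp_Ls b bt m (- s) (proj_s b m (Fk (\<lambda>_. exp_Lc b bt m s \<xi>)))
        = (\<Sum>j. (if m \<le> j then exp (s * (real k * \<beta> - bt j)) * inner (Fk (\<lambda>_. \<xi>)) (b j) else 0) *\<^sub>R b j)"
      by (rule integrand_on_center_space[where bt=bt, OF hb crit Fk H \<xi>])
    also have "\<dots> = (\<Sum>j. (exp (s * \<mu> j) * c j) *\<^sub>R b j)"
      by (intro arg_cong[where f=suminf] ext) (simp add: c_def \<mu>_def)
    finally show ?thesis .
  qed
  moreover have "(\<Sum>j. (c j / \<mu> j) *\<^sub>R b j)
      = (\<Sum>j. (if m \<le> j then inner (Fk (\<lambda>_. \<xi>)) (b j) / (real k * \<beta> - bt j) else 0) *\<^sub>R b j)"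
    by (intro arg_cong[where f=suminf] ext) (simp add: c_def \<mu>_def)
  ultimately show ?thesis
    using has_integral_exp_orthonormal_series[where \<mu>=\<mu>, OF hilbert_basis_orthonormal_seq[OF hb] c \<delta> \<mu>]
    by simp
qed

lemma stable_quotient_minus_resolvent:
  fixes b :: "nat \<Rightarrow> 'a::{real_inner,complete_space}"
  assumes hb: "hilbert_basis b"
    and stable: "\<And>j. m \<le> j \<Longrightarrow> bt j \<le> bb" and bb: "bb < 0"
    and \<delta>: "0 < \<delta>" and gap: "\<And>j. m \<le> j \<Longrightarrow> \<delta> \<le> r - bt j"
  shows "(\<Sum>j. (if m \<le> j then inner u (b j) / (r - bt j) else 0) *\<^sub>R b j) - inv_neg_Ls b bt m (proj_s b m u)
    = (\<Sum>j. (if m \<le> j then inner u (b j) * r / ((r - bt j) * bt j) else 0) *\<^sub>R b j)"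
proof -
  define v where "v j = inner u (b j)" for j
  have v: "summable (\<lambda>j. (v j)^2)"
    using hilbert_basis_parseval[OF hb] by (auto simp: sums_iff v_def)
  have quotient: "\<bar>if m \<le> j then v j / (r - bt j) else 0\<bar> \<le> 1 / \<delta> * \<bar>v j\<bar>" for j
    using gap[of j] \<delta> by (auto simp: abs_divide divide_left_mono)
  have resolvent: "\<bar>if m \<le> j then - v j / bt j else 0\<bar> \<le> 1 / - bb * \<bar>v j\<bar>" for j
  proof (cases "m \<le> j")
    case True
    then have "\<bar>v j\<bar> / \<bar>bt j\<bar> \<le> \<bar>v j\<bar> / - bb"
      using stable[of j] bb by (intro divide_left_mono) (auto simp: mult_neg_neg)
    then show ?thesis using True by (simp add: abs_divide)
  qed (use bb in \<open>simp add: divide_nonneg_neg\<close>)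
  have "(\<Sum>j. (if m \<le> j then v j / (r - bt j) else 0) *\<^sub>R b j)
      - (\<Sum>j. (if m \<le> j then - v j / bt j else 0) *\<^sub>R b j)
      = (\<Sum>j. ((if m \<le> j then v j / (r - bt j) else 0) - (if m \<le> j then - v j / bt j else 0)) *\<^sub>R b j)"
    unfolding scaleR_diff_left
    by (intro suminf_diff summable_orthonormal_series[OF hilbert_basis_orthonormal_seq[OF hb]]
        summable_sq_dominated[OF v quotient] summable_sq_dominated[OF v resolvent])
  also have "\<dots> = (\<Sum>j. (if m \<le> j then v j * r / ((r - bt j) * bt j) else 0) *\<^sub>R b j)"
  proof (intro arg_cong[where f=suminf] ext)
    fix j
    have "bt j \<noteq> 0" "r - bt j \<noteq> 0" if "m \<le> j"
      using stable[OF that] gap[OF that] bb \<delta> by auto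
    then show "((if m \<le> j then v j / (r - bt j) else 0) - (if m \<le> j then - v j / bt j else 0)) *\<^sub>R b j
        = (if m \<le> j then v j * r / ((r - bt j) * bt j) else 0) *\<^sub>R b j"
      by (cases "m \<le> j") (simp_all add: field_simps)
  qed
  finally show ?thesis
    unfolding inv_neg_Ls_proj_s[OF hb] v_def .
qed

lemma integral_minus_resolvent_bound:
  fixes b :: "nat \<Rightarrow> 'a::{real_inner,complete_space}" and bt :: "nat \<Rightarrow> real"
    and A :: "'a \<Rightarrow> 'a" and Fk :: "(nat \<Rightarrow> 'a) \<Rightarrow> 'a"
  assumes hb: "hilbert_basis b"
    and crit: "\<And>j. j < m \<Longrightarrow> bt j = \<beta>" and a: "a \<le> \<beta>"
    and stable: "\<And>j. m \<le> j \<Longrightarrow> bt j \<le> bb" and bb: "bb < 0" and gap: "bb < real k * a"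
    and H: "subspace H" "dom_L b bt \<subseteq> H"
    and K: "0 \<le> K" "\<And>u. u \<in> dom_L b bt \<Longrightarrow> norm (A u) \<le> K * (norm (op_L b bt u) + norm u)"
    and Fk: "bounded_klinear_on k H (\<lambda>u. norm (A u)) Fk"
    and M: "\<And>us. (\<forall>l<k. us l \<in> H) \<Longrightarrow> norm (Fk us) \<le> M * (\<Prod>l<k. norm (A (us l)))"
    and \<xi>: "\<xi> \<in> center_space b m"
  shows "\<exists>h. ((\<lambda>s. exp_Ls b bt m (- s) (proj_s b m (Fk (\<lambda>_. exp_Lc b bt m s \<xi>)))) has_integral h) {..0}
    \<and> h - inv_neg_Ls b bt m (proj_s b m (Fk (\<lambda>_. \<xi>))) \<in> H
    \<and> norm (A (h - inv_neg_Ls b bt m (proj_s b m (Fk (\<lambda>_. \<xi>)))))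
        \<le> K * M * real k * (1 - 1 / bb) / (real k * a - bb) * \<bar>\<beta>\<bar> * norm (A \<xi>) ^ k"
proof -
  define v where "v = Fk (\<lambda>_. \<xi>)"
  define r where "r = real k * \<beta>"
  define \<delta> where "\<delta> = real k * a - bb"
  define h where "h = (\<Sum>j. (if m \<le> j then inner v (b j) / (r - bt j) else 0) *\<^sub>R b j)"
  define D where "D = (\<Sum>j. (if m \<le> j then inner v (b j) * r / ((r - bt j) * bt j) else 0) *\<^sub>R b j)"
  have \<delta>: "0 < \<delta>" using gap by (simp add: \<delta>_def)
  have \<delta>_gap: "\<delta> \<le> r - bt j" if "m \<le> j" for j
    using stable[OF that] mult_left_mono[OF a, of "real k"] by (simp add: \<delta>_def r_def)
  have center_H: "center_space b m \<subseteq> H"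
    unfolding center_space_def using orthonormal_seq_in_dom_L[OF hilbert_basis_orthonormal_seq[OF hb]] H
    by (intro span_minimal) (auto simp: subspace_def)
  have integral: "((\<lambda>s. exp_Ls b bt m (- s) (proj_s b m (Fk (\<lambda>_. exp_Lc b bt m s \<xi>)))) has_integral h) {..0}"
    unfolding h_def v_def r_def
    by (rule has_integral_on_center_space[where bt=bt, OF hb crit Fk H(1) center_H \<xi> \<delta> \<delta>_gap[unfolded r_def]])
  have diff: "h - inv_neg_Ls b bt m (proj_s b m v) = D"
    unfolding h_def D_def by (rule stable_quotient_minus_resolvent[OF hb stable bb \<delta> \<delta>_gap])
  have "summable (\<lambda>j. (inner v (b j))^2)" "sqrt (\<Sum>j. (inner v (b j))^2) = norm v"
    using hilbert_basis_parseval[OF hb, of v] by (auto simp: sums_iff)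
  note correction = resolvent_correction_bounds[where bt=bt and m=m and r=r,
      OF hilbert_basis_orthonormal_seq[OF hb] this(1) stable bb \<delta>_gap \<delta>, folded D_def, unfolded this(2)]
  have "norm v \<le> M * norm (A \<xi>) ^ k"
    using M[of "\<lambda>_. \<xi>"] center_H \<xi> by (auto simp: v_def)
  have "norm (A D) \<le> K * (norm (op_L b bt D) + norm D)"
    using K(2) correction(1) .
  also have "\<dots> \<le> K * (\<bar>r\<bar> / \<delta> * norm v + \<bar>r\<bar> / (\<delta> * - bb) * norm v)"
    using correction(2,3) K(1) by (intro mult_left_mono add_mono) auto
  also have "\<dots> = K * \<bar>r\<bar> * (1 - 1 / bb) / \<delta> * norm v"
    using \<delta> bb by (simp add: field_simps)
  also have "\<dots> \<le> K * \<bar>r\<bar> * (1 - 1 / bb) / \<delta> * (M * norm (A \<xi>) ^ k)"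
    using \<open>norm v \<le> M * norm (A \<xi>) ^ k\<close> K(1) bb \<delta>
    by (intro mult_left_mono) (simp_all add: divide_nonneg_neg)
  also have "\<dots> = K * M * real k * (1 - 1 / bb) / (real k * a - bb) * \<bar>\<beta>\<bar> * norm (A \<xi>) ^ k"
    by (simp add: r_def \<delta>_def abs_mult mult_ac)
  finally show ?thesis
    using integral diff correction(1) H(2) unfolding v_def by blast
qed

theorem lemma8p3:
  fixes e :: "real \<Rightarrow> nat \<Rightarrow> 'a::{real_inner,complete_space}"
    and \<beta> :: "real \<Rightarrow> nat \<Rightarrow> real"
    and m k :: nat and lamc :: real and \<Lambda> :: "real set"
    and A\<alpha> :: "'a \<Rightarrow> 'a" and H\<alpha> :: "'a set"
    and Fk :: "(nat \<Rightarrow> 'a) \<Rightarrow> 'a"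
  assumes basis: "\<And>lam. hilbert_basis (e lam)"
    and ordered: "\<And>lam i j. i \<le> j \<Longrightarrow> \<beta> lam j \<le> \<beta> lam i"
    and compact_res: "\<And>lam. filterlim (\<beta> lam) at_bot sequentially"
    and beta_cont: "\<And>j. continuous_on UNIV (\<lambda>lam. \<beta> lam j)"
    and m_pos: "1 \<le> m" and k_ge: "2 \<le> k"
    and Lambda_open: "open \<Lambda>" and lc_in: "lamc \<in> \<Lambda>"
    and exch: "\<And>lam j. lam \<in> \<Lambda> \<Longrightarrow> j < m \<Longrightarrow>
        (lam < lamc \<longrightarrow> \<beta> lam j < 0) \<and> (lam = lamc \<longrightarrow> \<beta> lam j = 0) \<and> (lam > lamc \<longrightarrow> \<beta> lam j > 0)"
    and exch_s: "\<And>j. m \<le> j \<Longrightarrow> \<beta> lamc j < 0"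
    and gap: "\<exists>a b. 0 > 2 * real k * a \<and> 2 * real k * a > b \<and>
        (\<forall>lam\<in>\<Lambda>. \<forall>j<m. a \<le> \<beta> lam j) \<and> (\<forall>lam\<in>\<Lambda>. \<forall>j. m \<le> j \<longrightarrow> \<beta> lam j \<le> b)"
    and equal_crit: "\<And>lam j. lam \<in> \<Lambda> \<Longrightarrow> j < m \<Longrightarrow> \<beta> lam j = \<beta> lam 0"
    and H\<alpha>_sub: "subspace H\<alpha>"
    and A\<alpha>_lin: "\<And>u v a c. u \<in> H\<alpha> \<Longrightarrow> v \<in> H\<alpha> \<Longrightarrow> A\<alpha> (a *\<^sub>R u + c *\<^sub>R v) = a *\<^sub>R A\<alpha> u + c *\<^sub>R A\<alpha> v"
    and A\<alpha>_inj: "\<And>u. u \<in> H\<alpha> \<Longrightarrow> A\<alpha> u = 0 \<Longrightarrow> u = 0"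
    and domL_sub: "\<And>lam. lam \<in> \<Lambda> \<Longrightarrow> dom_L (e lam) (\<beta> lam) \<subseteq> H\<alpha>"
    and domL_emb: "\<exists>K. \<forall>\<^sub>F lam in nhds lamc. \<forall>u \<in> dom_L (e lam) (\<beta> lam).
        norm (A\<alpha> u) \<le> K * (norm (op_L (e lam) (\<beta> lam) u) + norm u)"
    and Fk_bdd: "bounded_klinear_on k H\<alpha> (\<lambda>u. norm (A\<alpha> u)) Fk"
  shows "\<exists>C. \<forall>\<^sub>F lam in nhds lamc. \<forall>\<xi> \<in> center_space (e lam) m.
     \<exists>h. ((\<lambda>s. exp_Ls (e lam) (\<beta> lam) m (- s)
              (proj_s (e lam) m (Fk (\<lambda>_. exp_Lc (e lam) (\<beta> lam) m s \<xi>)))) has_integral h) {..0}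
       \<and> h - inv_neg_Ls (e lam) (\<beta> lam) m (proj_s (e lam) m (Fk (\<lambda>_. \<xi>))) \<in> H\<alpha>
       \<and> norm (A\<alpha> (h - inv_neg_Ls (e lam) (\<beta> lam) m (proj_s (e lam) m (Fk (\<lambda>_. \<xi>)))))
           \<le> C * \<bar>\<beta> lam 0\<bar> * norm (A\<alpha> \<xi>) ^ k"
  \<comment> \<open>Only the gap on \<open>\<Lambda>\<close>, the equal critical eigenvalues and the bounds on F_k and on
    the domain of \<open>L\<close> enter; the other hypotheses merely describe the setting.\<close>
proof -
  obtain a bb where "0 > 2 * real k * a" "2 * real k * a > bb"
    and crit_lower: "\<forall>lam\<in>\<Lambda>. \<forall>j<m. a \<le> \<beta> lam j"
    and stable_upper: "\<forall>lam\<in>\<Lambda>. \<forall>j. m \<le> j \<longrightarrow> \<beta> lam j \<le> bb"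
    using gap by blast
  then have bb: "bb < 0" "bb < real k * a" by linarith+
  obtain K where K: "\<forall>\<^sub>F lam in nhds lamc. \<forall>u \<in> dom_L (e lam) (\<beta> lam).
      norm (A\<alpha> u) \<le> K * (norm (op_L (e lam) (\<beta> lam) u) + norm u)"
    using domL_emb by blast
  obtain M where M: "\<And>us. (\<forall>l<k. us l \<in> H\<alpha>) \<Longrightarrow> norm (Fk us) \<le> M * (\<Prod>l<k. norm (A\<alpha> (us l)))"
    using Fk_bdd unfolding bounded_klinear_on_def by blast
  have "\<forall>\<^sub>F lam in nhds lamc. lam \<in> \<Lambda> \<and> (\<forall>u \<in> dom_L (e lam) (\<beta> lam).
      norm (A\<alpha> u) \<le> max K 0 * (norm (op_L (e lam) (\<beta> lam) u) + norm u))"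
    using eventually_conj[OF eventually_nhds_in_open[OF Lambda_open lc_in] K]
    by (elim eventually_mono)
      (meson max.cobounded1 mult_right_mono order_trans add_nonneg_nonneg norm_ge_zero)
  then show ?thesis
    by (intro exI[of _ "max K 0 * M * real k * (1 - 1 / bb) / (real k * a - bb)"], elim eventually_mono,
        intro ballI integral_minus_resolvent_bound[OF basis equal_crit _ _ bb H\<alpha>_sub domL_sub _ _ Fk_bdd M])
      (use m_pos crit_lower stable_upper in auto)
qed

end
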